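(* Let $\varepsilon\in\{1,-1\}$ and let $w$ be a positive integer. If $T'_n(\varepsilon)\equiv 1 \pmod{p^w}$, then for every integer $m\ge 2$, $$\frac{T^{(m)}_n(\varepsilon)\, p^m}{m!}\equiv 0 \pmod{p^{w+2}}$$ (here $T^{(m)}_n(\varepsilon)/m!$ is an integer).
   Context: $p$ is a prime with $p>3$ and $n>1$ is an integer with $\gcd(n,p)=\gcd(n,p^2-1)=1$. $T_n(x)\in\mathbb{Z}[x]$ is the Chebyshev polynomial of the first kind: $T_0=1$, $T_1=x$, $T_d=2xT_{d-1}-T_{d-2}$. $T^{(m)}_n$ is its $m$-th derivative and $T'_n=T^{(1)}_n$. *)

theory Defs
  imports "HOL-Computational_Algebra.Polynomial" "HOL-Number_Theory.Cong"
begin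

fun cheb_T :: "nat \<Rightarrow> int poly" where
  "cheb_T 0 = 1"
| "cheb_T (Suc 0) = [:0, 1:]"
| "cheb_T (Suc (Suc d)) = [:0, 2:] * cheb_T (Suc d) - cheb_T d"

end

theory Submission
  imports Defs
begin

text \<open>
  Differentiating the Chebyshev equation \<open>(1 - x\<^sup>2) T'' - x T' + n\<^sup>2 T = 0\<close> \<open>k\<close> times and
  evaluating at \<open>x = \<epsilon>\<close>, where \<open>1 - x\<^sup>2\<close> vanishes, gives a two-term recurrence
  \<open>(2k + 1)(k + 1) a(k + 1) = \<epsilon> (n\<^sup>2 - k\<^sup>2) a(k)\<close> for the Taylor coefficients \<open>a(k) = T\<^sup>(\<^sup>k\<^sup>)(\<epsilon>) / k!\<close>.
  Hence \<open>a(m) (2m)!\<close> is a multiple of \<open>n\<^sup>2 - 1\<close> for \<open>m \<ge> 2\<close>. For odd \<open>n\<close> the recurrence also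
  gives \<open>T'(\<epsilon>) = n\<^sup>2\<close>, so the hypothesis says that \<open>p\<^sup>w\<close> divides \<open>n\<^sup>2 - 1\<close>. Finally, by Legendre's
  formula \<open>p\<close> occurs in \<open>(2m)!\<close> at most \<open>(2m - 1)/(p - 1) \<le> m - 2\<close> times when \<open>p \<ge> 5\<close>, so
  replacing the factor \<open>(2m)!\<close> by \<open>p\<^sup>m\<close> gains at least two factors \<open>p\<close>.
\<close>

text \<open>An opaque name for \<open>x\<close> keeps the simplifier from expanding products with \<open>[:0, 1:]\<close>
  coefficientwise.\<close>
definition X_poly :: "int poly" where
  "X_poly = [:0, 1:]"

lemma pderiv_X_poly [simp]: "pderiv X_poly = 1"
  by (simp add: X_poly_def pderiv_pCons one_pCons)

lemma poly_X_poly [simp]: "poly X_poly x = x"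
  by (simp add: X_poly_def)

lemma cheb_T_Suc_0: "cheb_T (Suc 0) = X_poly"
  by (simp add: X_poly_def)

lemma cheb_T_Suc_Suc: "cheb_T (Suc (Suc d)) = 2 * X_poly * cheb_T (Suc d) - cheb_T d"
proof -
  have "[:0, 2:] = 2 * X_poly"
    by (simp add: X_poly_def numeral_poly)
  then show ?thesis
    by simp
qed

declare cheb_T.simps(2,3) [simp del]

lemma cheb_T_pderiv_eq:
  "(1 - X_poly\<^sup>2) * pderiv (cheb_T n) = of_nat n * (X_poly * cheb_T n - cheb_T (Suc n))"
proof (induction n rule: cheb_T.induct)
  case 1
  then show ?case
    by simp
next
  case 2
  then show ?case
    by (simp add: cheb_T_Suc_Suc cheb_T_Suc_0 algebra_simps power2_eq_square)
next
  case (3 d)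
  let ?T = "cheb_T d" and ?S = "cheb_T (Suc d)"
  have "(1 - X_poly\<^sup>2) * pderiv (cheb_T (Suc (Suc d)))
      = 2 * (1 - X_poly\<^sup>2) * ?S + 2 * X_poly * ((1 - X_poly\<^sup>2) * pderiv ?S)
        - (1 - X_poly\<^sup>2) * pderiv ?T"
    by (simp add: cheb_T_Suc_Suc pderiv_diff pderiv_mult algebra_simps)
  also have "\<dots> = 2 * (1 - X_poly\<^sup>2) * ?S
        + 2 * X_poly * (of_nat (Suc d) * (X_poly * ?S - (2 * X_poly * ?S - ?T)))
        - of_nat d * (X_poly * ?T - ?S)"
    using "3" by (simp add: cheb_T_Suc_Suc)
  also have "\<dots> = of_nat (Suc (Suc d)) * (X_poly * cheb_T (Suc (Suc d)) - cheb_T (Suc (Suc (Suc d))))"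
    by (simp add: cheb_T_Suc_Suc[of "Suc d"] cheb_T_Suc_Suc[of d] algebra_simps power2_eq_square)
  finally show ?case .
qed

lemma one_minus_X_poly_square_nonzero: "1 - X_poly\<^sup>2 \<noteq> 0"
proof
  assume "1 - X_poly\<^sup>2 = 0"
  then have "poly (1 - X_poly\<^sup>2) 2 = 0"
    by simp
  then show False
    by simp
qed

lemma cheb_T_ode:
  "(1 - X_poly\<^sup>2) * (pderiv ^^ 2) (cheb_T n) - X_poly * pderiv (cheb_T n) + of_nat n ^ 2 * cheb_T n = 0"
proof -
  let ?T = "cheb_T n" and ?S = "cheb_T (Suc n)"
  have T': "(1 - X_poly\<^sup>2) * pderiv ?T = of_nat n * (X_poly * ?T - ?S)"
    by (rule cheb_T_pderiv_eq)
  have S': "(1 - X_poly\<^sup>2) * pderiv ?S = of_nat (Suc n) * (?T - X_poly * ?S)"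
    using cheb_T_pderiv_eq[of "Suc n"] by (simp add: cheb_T_Suc_Suc algebra_simps)
  have T'': "(1 - X_poly\<^sup>2) * (pderiv ^^ 2) ?T - 2 * X_poly * pderiv ?T
      = of_nat n * (?T + X_poly * pderiv ?T - pderiv ?S)"
    using arg_cong[OF T', of pderiv]
    by (simp add: numeral_2_eq_2 pderiv_diff pderiv_mult power2_eq_square algebra_simps pderiv_of_nat)
  have "(1 - X_poly\<^sup>2) * ((1 - X_poly\<^sup>2) * (pderiv ^^ 2) ?T - X_poly * pderiv ?T + of_nat n ^ 2 * ?T)
      = (1 - X_poly\<^sup>2) * (of_nat n * (?T + X_poly * pderiv ?T - pderiv ?S))
        + X_poly * ((1 - X_poly\<^sup>2) * pderiv ?T) + of_nat n ^ 2 * (1 - X_poly\<^sup>2) * ?T"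
    unfolding T''[symmetric] by (simp add: algebra_simps)
  also have "\<dots> = of_nat n * (1 - X_poly\<^sup>2) * ?T + (of_nat n * X_poly + X_poly) * ((1 - X_poly\<^sup>2) * pderiv ?T)
        - of_nat n * ((1 - X_poly\<^sup>2) * pderiv ?S) + of_nat n ^ 2 * (1 - X_poly\<^sup>2) * ?T"
    by (simp add: algebra_simps)
  also have "\<dots> = 0"
    unfolding T' S' by (simp add: algebra_simps power2_eq_square)
  finally show ?thesis
    using one_minus_X_poly_square_nonzero by simp
qed

lemma cheb_T_higher_ode:
  "(1 - X_poly\<^sup>2) * (pderiv ^^ Suc (Suc k)) (cheb_T n) - of_nat (2 * k + 1) * X_poly * (pderiv ^^ Suc k) (cheb_T n)
     + (of_nat n ^ 2 - of_nat k ^ 2) * (pderiv ^^ k) (cheb_T n) = 0"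
proof (induction k)
  case 0
  then show ?case
    using cheb_T_ode[of n] by (simp add: numeral_2_eq_2)
next
  case (Suc k)
  let ?D = "\<lambda>j. (pderiv ^^ j) (cheb_T n)"
  have "pderiv ((1 - X_poly\<^sup>2) * ?D (Suc (Suc k)) - of_nat (2 * k + 1) * X_poly * ?D (Suc k)
      + (of_nat n ^ 2 - of_nat k ^ 2) * ?D k) = 0"
    using Suc.IH by simp
  then show ?case
    by (simp add: pderiv_diff pderiv_add pderiv_mult pderiv_of_nat power2_eq_square algebra_simps)
qed

lemma poly_cheb_T_sign:
  assumes "\<epsilon> \<in> {1, -1}"
  shows "poly (cheb_T n) \<epsilon> = \<epsilon> ^ n"
proof (induction n rule: cheb_T.induct)
  case (3 d)
  have "\<epsilon> * \<epsilon> = 1"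
    using assms by auto
  then show ?case
    using "3" by (simp add: cheb_T_Suc_Suc algebra_simps)
qed (simp_all add: cheb_T_Suc_0)

lemma poly_higher_pderiv_cheb_T_rec:
  assumes "\<epsilon> \<in> {1, -1}"
  shows "of_nat (2 * k + 1) * poly ((pderiv ^^ Suc k) (cheb_T n)) \<epsilon>
       = \<epsilon> * (int n ^ 2 - int k ^ 2) * poly ((pderiv ^^ k) (cheb_T n)) \<epsilon>"
proof -
  have "\<epsilon>\<^sup>2 = 1"
    using assms by auto
  moreover have "(1 - \<epsilon>\<^sup>2) * poly ((pderiv ^^ Suc (Suc k)) (cheb_T n)) \<epsilon>
      - of_nat (2 * k + 1) * \<epsilon> * poly ((pderiv ^^ Suc k) (cheb_T n)) \<epsilon>
      + (int n ^ 2 - int k ^ 2) * poly ((pderiv ^^ k) (cheb_T n)) \<epsilon> = 0"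
    using arg_cong[OF cheb_T_higher_ode[of k n], of "\<lambda>P. poly P \<epsilon>"] by (simp add: of_nat_poly)
  ultimately show ?thesis
    by (simp add: power2_eq_square) (metis mult.assoc mult.commute mult.left_neutral)
qed

lemma poly_pderiv_cheb_T_sign:
  assumes "\<epsilon> \<in> {1, -1}"
  shows "poly (pderiv (cheb_T n)) \<epsilon> = \<epsilon> ^ Suc n * int n ^ 2"
  using poly_higher_pderiv_cheb_T_rec[OF assms, of 0 n] poly_cheb_T_sign[OF assms, of n]
  by (simp add: algebra_simps)

lemma fact_dvd_poly_higher_pderiv: "(fact k :: int) dvd poly ((pderiv ^^ k) P) x"
  unfolding poly_altdef coeff_higher_pderiv by (intro dvd_sum dvd_mult2 fact_dvd_pochhammer)

definition cheb_taylor :: "nat \<Rightarrow> int \<Rightarrow> nat \<Rightarrow> int" where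
  "cheb_taylor n x k = poly ((pderiv ^^ k) (cheb_T n)) x div fact k"

lemma fact_mult_cheb_taylor: "fact k * cheb_taylor n x k = poly ((pderiv ^^ k) (cheb_T n)) x"
  unfolding cheb_taylor_def using fact_dvd_poly_higher_pderiv by simp

lemma cheb_taylor_rec:
  assumes "\<epsilon> \<in> {1, -1}"
  shows "of_nat (2 * k + 1) * of_nat (Suc k) * cheb_taylor n \<epsilon> (Suc k)
       = \<epsilon> * (int n ^ 2 - int k ^ 2) * cheb_taylor n \<epsilon> k"
proof -
  have "fact k * (of_nat (2 * k + 1) * of_nat (Suc k) * cheb_taylor n \<epsilon> (Suc k))
      = fact k * (\<epsilon> * (int n ^ 2 - int k ^ 2) * cheb_taylor n \<epsilon> k)"
    using poly_higher_pderiv_cheb_T_rec[OF assms, of k n]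
    unfolding fact_mult_cheb_taylor[of k, symmetric] fact_mult_cheb_taylor[of "Suc k", symmetric]
    by (simp add: algebra_simps)
  then show ?thesis
    by simp
qed

lemma cheb_taylor_mult_fact_double_dvd:
  assumes "\<epsilon> \<in> {1, -1}" and "2 \<le> k"
  shows "int n ^ 2 - 1 dvd cheb_taylor n \<epsilon> k * fact (2 * k)"
  using assms(2)
proof (induction k rule: dec_induct)
  case base
  have "cheb_taylor n \<epsilon> 2 * fact (2 * 2) = 4 * (of_nat (2 * 1 + 1) * of_nat (Suc 1) * cheb_taylor n \<epsilon> (Suc 1))"
    by (simp add: fact_numeral numeral_2_eq_2)
  also have "\<dots> = 4 * \<epsilon> * cheb_taylor n \<epsilon> 1 * (int n ^ 2 - 1)"
    unfolding cheb_taylor_rec[OF assms(1)] by simp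
  finally show ?case
    by simp
next
  case (step k)
  have fact_double_Suc: "(fact (2 * Suc k) :: int) = 2 * of_nat (2 * k + 1) * of_nat (Suc k) * fact (2 * k)"
    by (simp add: fact_Suc algebra_simps)
  have "cheb_taylor n \<epsilon> (Suc k) * fact (2 * Suc k)
      = 2 * (of_nat (2 * k + 1) * of_nat (Suc k) * cheb_taylor n \<epsilon> (Suc k)) * fact (2 * k)"
    unfolding fact_double_Suc by (simp add: algebra_simps)
  also have "\<dots> = 2 * \<epsilon> * (int n ^ 2 - int k ^ 2) * (cheb_taylor n \<epsilon> k * fact (2 * k))"
    unfolding cheb_taylor_rec[OF assms(1)] by (simp add: algebra_simps)
  finally have recurrence: "cheb_taylor n \<epsilon> (Suc k) * fact (2 * Suc k)
      = 2 * \<epsilon> * (int n ^ 2 - int k ^ 2) * (cheb_taylor n \<epsilon> k * fact (2 * k))" .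
  show ?case
    unfolding recurrence using step.IH by (rule dvd_mult)
qed

lemma multiplicity_fact_div:
  fixes p N :: nat
  assumes p: "prime p"
  shows "multiplicity p (fact N :: nat) = N div p + multiplicity p (fact (N div p) :: nat)"
proof (induction N)
  case 0
  then show ?case
    by simp
next
  case (Suc N)
  have "p > 1"
    using p prime_gt_1_nat by blast
  have fact_Suc_N: "multiplicity p (fact (Suc N) :: nat) = multiplicity p (Suc N) + multiplicity p (fact N :: nat)"
  proof -
    have "(fact (Suc N) :: nat) = Suc N * fact N"
      by (simp only: fact_Suc of_nat_id)
    then show ?thesis
      using p by (simp only: prime_elem_multiplicity_mult_distrib prime_imp_prime_elem fact_nonzero
          Suc_neq_Zero simp_thms)
  qed
  show ?case
  proof (cases "p dvd Suc N")
    case False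
    then have "Suc N div p = N div p"
      by (simp add: div_Suc dvd_eq_mod_eq_0)
    moreover have "multiplicity p (Suc N) = 0"
      using False by (rule not_dvd_imp_multiplicity_0)
    ultimately show ?thesis
      using fact_Suc_N Suc.IH by simp
  next
    case True
    then obtain q where q: "Suc N = p * q"
      by blast
    have "q > 0"
      using q by (cases q) auto
    have div_Suc_N: "Suc N div p = q"
      using q \<open>p > 1\<close> by simp
    moreover have "Suc N div p = Suc (N div p)"
      using True by (simp add: div_Suc)
    ultimately have div_N: "N div p = q - 1"
      by simp
    have "multiplicity p (p * q) = Suc (multiplicity p q)"
      using \<open>q > 0\<close> \<open>p > 1\<close> by (intro multiplicity_times_same) auto
    then have mult_Suc_N: "multiplicity p (Suc N) = Suc (multiplicity p q)"
      by (simp only: q)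
    have "fact q = q * (fact (q - 1) :: nat)"
      using \<open>q > 0\<close> by (cases q) simp_all
    then have "multiplicity p (fact q :: nat) = multiplicity p q + multiplicity p (fact (q - 1) :: nat)"
      using p \<open>q > 0\<close> by (simp add: prime_elem_multiplicity_mult_distrib)
    then show ?thesis
      using fact_Suc_N Suc.IH mult_Suc_N div_Suc_N div_N \<open>q > 0\<close> by simp
  qed
qed

lemma multiplicity_fact_le:
  fixes p N :: nat
  assumes p: "prime p" and "N \<ge> 1"
  shows "multiplicity p (fact N :: nat) * (p - 1) \<le> N - 1"
  using assms(2)
proof (induction N rule: less_induct)
  case (less N)
  have "p > 1"
    using p prime_gt_1_nat by blast
  define q where "q = N div p"
  have fact_N: "multiplicity p (fact N :: nat) = q + multiplicity p (fact q :: nat)"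
    unfolding q_def by (rule multiplicity_fact_div[OF p])
  show ?case
  proof (cases "q = 0")
    case True
    then show ?thesis
      using fact_N by simp
  next
    case False
    have "q < N"
      unfolding q_def using \<open>p > 1\<close> less.prems by simp
    then have IH: "multiplicity p (fact q :: nat) * (p - 1) \<le> q - 1"
      using less.IH False by simp
    have "multiplicity p (fact N :: nat) * (p - 1) = q * (p - 1) + multiplicity p (fact q :: nat) * (p - 1)"
      using fact_N by (simp add: algebra_simps)
    also have "\<dots> \<le> q * p - 1"
      using IH False \<open>p > 1\<close> by (simp add: algebra_simps diff_mult_distrib2)
    also have "\<dots> \<le> N - 1"
      unfolding q_def by (simp add: div_times_less_eq_dividend diff_le_mono)
    finally show ?thesis .
  qed
qed

lemma prime_power_dvd_mult_power_of_dvd_mult_fact: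
  fixes p w m :: nat and a :: int
  assumes p: "prime p" "5 \<le> p" and "2 \<le> m" and dvd: "int p ^ w dvd a * fact (2 * m)"
  shows "int p ^ (w + 2) dvd a * int p ^ m"
proof -
  define v where "v = multiplicity p (fact (2 * m) :: nat)"
  obtain u where u: "(fact (2 * m) :: nat) = p ^ v * u" "\<not> p dvd u"
    using multiplicity_decompose'[of "fact (2 * m) :: nat" p] p unfolding v_def by auto
  have "v * (p - 1) \<le> 2 * m - 1"
    unfolding v_def using multiplicity_fact_le[OF p(1), of "2 * m"] assms(3) by simp
  moreover have "v * 4 \<le> v * (p - 1)"
    using p(2) by (intro mult_le_mono2) linarith
  ultimately have "v + 2 \<le> m"
    using assms(3) by linarith
  have "coprime (int p ^ w) (int u)"
    using prime_imp_coprime[OF p(1) u(2)] by simp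
  moreover have "int p ^ w dvd (a * int p ^ v) * int u"
    using dvd u(1) by (metis mult.assoc of_nat_fact of_nat_mult of_nat_power)
  ultimately have "int p ^ w dvd a * int p ^ v"
    by (simp add: coprime_dvd_mult_left_iff)
  have "int p ^ (w + 2) dvd int p ^ w * int p ^ (m - v)"
    unfolding power_add[symmetric] using \<open>v + 2 \<le> m\<close> by (intro le_imp_power_dvd) simp
  also have "\<dots> dvd (a * int p ^ v) * int p ^ (m - v)"
    using \<open>int p ^ w dvd a * int p ^ v\<close> by (rule mult_dvd_mono) simp
  also have "\<dots> = a * int p ^ m"
    using \<open>v + 2 \<le> m\<close> by (simp add: mult.assoc power_add[symmetric])
  finally show ?thesis .
qed

theorem lemma2:
  fixes p n w m :: nat and \<epsilon> :: int
  assumes "prime p" and "p > 3" and "n > 1"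
    and "gcd n p = 1" and "gcd n (p^2 - 1) = 1"
    and "\<epsilon> \<in> {1, -1}" and "w > 0"
    and "[poly (pderiv (cheb_T n)) \<epsilon> = 1] (mod (int p ^ w))"
    and "m \<ge> 2"
  shows "[poly ((pderiv ^^ m) (cheb_T n)) \<epsilon> div fact m * int p ^ m = 0] (mod (int p ^ (w + 2)))"
proof -
  have "odd p"
    using prime_odd_nat assms(1,2) by simp
  have "odd n"
  proof
    assume "even n"
    moreover have "even (p^2 - 1)"
      using \<open>odd p\<close> by simp
    ultimately have "2 dvd gcd n (p^2 - 1)"
      by (rule gcd_greatest)
    then show False
      unfolding assms(5) by simp
  qed
  then have "poly (pderiv (cheb_T n)) \<epsilon> = int n ^ 2"
    using poly_pderiv_cheb_T_sign[OF assms(6)] assms(6) by auto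
  then have "int p ^ w dvd int n ^ 2 - 1"
    using assms(8) by (simp add: cong_iff_dvd_diff)
  also have "\<dots> dvd cheb_taylor n \<epsilon> m * fact (2 * m)"
    using cheb_taylor_mult_fact_double_dvd[OF assms(6,9)] .
  finally have "int p ^ w dvd cheb_taylor n \<epsilon> m * fact (2 * m)" .
  moreover have "5 \<le> p"
    using assms(2) \<open>odd p\<close> by presburger
  ultimately have "int p ^ (w + 2) dvd cheb_taylor n \<epsilon> m * int p ^ m"
    using prime_power_dvd_mult_power_of_dvd_mult_fact assms(1,9) by blast
  then show ?thesis
    unfolding cong_0_iff cheb_taylor_def .
qed

end
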